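(* Let $Z_1,\dots,Z_n$ be (possibly dependent) random vectors in $\mathbb R^p$ with $Z_i=\Sigma_i^{1/2}X_i$, where $\Sigma_i$ is positive semidefinite and $X_i$ has mean $0$ and covariance $\mathrm I_p$. Assume that for every convex $1$-Lipschitz $f:\mathbb R^p\to\mathbb R$, if $m_{f(X_i)}$ is a median of $f(X_i)$, then $P(|f(X_i)-m_{f(X_i)}|>t)\le2\exp(-c_it^2)$ for all $t>0$, with $c_i>0$. Let $Q_1,\dots,Q_n$ be $p\times p$ positive definite matrices. Then $$\sup_{1\le i\le n}\Big|\sqrt{Z_i^TQ_iZ_i}-\mathbb E\sqrt{Z_i^TQ_iZ_i}\Big|=O_P\Big(\sup_i\sqrt{\|Q_i\Sigma_i/c_i\|_{op}}\sqrt{\log n}\Big).$$ Moreover, when $\sup_i\sqrt{\|Q_i\Sigma_i/c_i\|_{op}}\sqrt{\log n}\to0$, $$\sup_{1\le i\le n}\big|Z_i^TQ_iZ_i-\mathrm{trace}(\Sigma_iQ_i)\big|=O_P\Big(\sup_i\sqrt{\|Q_i\Sigma_i/c_i\|_{op}}\sqrt{\log n}\,\big[\sup_i\sqrt{\mathrm{trace}(\Sigma_iQ_i)}\vee1\big]\Big).$$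
   Context: Asymptotics as $n\to\infty$ (with $p$, $\Sigma_i$, $Q_i$, $c_i$ allowed to depend on $n$). $X=O_P(a)$ means that for every $\delta>0$ there is $K$ with $P(|X|>Ka)<\delta$ for all large $n$. $\|\cdot\|_{op}$ is the operator norm (largest singular value); $a\vee b=\max(a,b)$. *)

theory Defs
  imports "HOL-Probability.Probability"
begin

text \<open>Vectors in R^p are functions nat => real, only coordinates j < p matter;
  p x p matrices are functions nat => nat => real, only entries j,k < p matter.\<close>

definition mat_mult :: "nat \<Rightarrow> (nat \<Rightarrow> nat \<Rightarrow> real) \<Rightarrow> (nat \<Rightarrow> nat \<Rightarrow> real) \<Rightarrow> (nat \<Rightarrow> nat \<Rightarrow> real)" where
  "mat_mult p A B = (\<lambda>j k. \<Sum>l<p. A j l * B l k)"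

definition mat_vec :: "nat \<Rightarrow> (nat \<Rightarrow> nat \<Rightarrow> real) \<Rightarrow> (nat \<Rightarrow> real) \<Rightarrow> (nat \<Rightarrow> real)" where
  "mat_vec p A x = (\<lambda>j. \<Sum>k<p. A j k * x k)"

definition quad_form :: "nat \<Rightarrow> (nat \<Rightarrow> nat \<Rightarrow> real) \<Rightarrow> (nat \<Rightarrow> real) \<Rightarrow> real" where
  "quad_form p A x = (\<Sum>j<p. \<Sum>k<p. x j * A j k * x k)"

definition mat_trace :: "nat \<Rightarrow> (nat \<Rightarrow> nat \<Rightarrow> real) \<Rightarrow> real" where
  "mat_trace p A = (\<Sum>j<p. A j j)"

definition enorm :: "nat \<Rightarrow> (nat \<Rightarrow> real) \<Rightarrow> real" where
  "enorm p x = sqrt (\<Sum>j<p. (x j)\<^sup>2)"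

definition op_norm :: "nat \<Rightarrow> (nat \<Rightarrow> nat \<Rightarrow> real) \<Rightarrow> real" where
  "op_norm p A = Sup {enorm p (mat_vec p A x) | x. enorm p x \<le> 1}"

definition mat_symmetric :: "nat \<Rightarrow> (nat \<Rightarrow> nat \<Rightarrow> real) \<Rightarrow> bool" where
  "mat_symmetric p A \<longleftrightarrow> (\<forall>j<p. \<forall>k<p. A j k = A k j)"

definition pos_semidef :: "nat \<Rightarrow> (nat \<Rightarrow> nat \<Rightarrow> real) \<Rightarrow> bool" where
  "pos_semidef p A \<longleftrightarrow> mat_symmetric p A \<and> (\<forall>x. quad_form p A x \<ge> 0)"

definition pos_def :: "nat \<Rightarrow> (nat \<Rightarrow> nat \<Rightarrow> real) \<Rightarrow> bool" where
  "pos_def p A \<longleftrightarrow> mat_symmetric p A \<and> (\<forall>x. (\<exists>j<p. x j \<noteq> 0) \<longrightarrow> quad_form p A x > 0)"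

text \<open>Convex 1-Lipschitz functions on R^p (w.r.t. the Euclidean norm of the first p coordinates;
  such f depend only on the first p coordinates).\<close>
definition convex_lip1 :: "nat \<Rightarrow> ((nat \<Rightarrow> real) \<Rightarrow> real) \<Rightarrow> bool" where
  "convex_lip1 p f \<longleftrightarrow>
     (\<forall>x y. \<bar>f x - f y\<bar> \<le> enorm p (\<lambda>j. x j - y j)) \<and>
     (\<forall>x y u. 0 \<le> u \<and> u \<le> 1 \<longrightarrow>
        f (\<lambda>j. u * x j + (1 - u) * y j) \<le> u * f x + (1 - u) * f y)"

definition is_median :: "'a measure \<Rightarrow> ('a \<Rightarrow> real) \<Rightarrow> real \<Rightarrow> bool" where
  "is_median M Y m \<longleftrightarrow>
     measure M {\<omega>\<in>space M. Y \<omega> \<le> m} \<ge> 1/2 \<and> measure M {\<omega>\<in>space M. Y \<omega> \<ge> m} \<ge> 1/2"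

definition bigO_P :: "(nat \<Rightarrow> 'a measure) \<Rightarrow> (nat \<Rightarrow> 'a \<Rightarrow> real) \<Rightarrow> (nat \<Rightarrow> real) \<Rightarrow> bool" where
  "bigO_P M Y a \<longleftrightarrow> (\<forall>\<delta>>0. \<exists>K. \<forall>\<^sub>F n in sequentially.
      measure (M n) {\<omega>\<in>space (M n). \<bar>Y n \<omega>\<bar> > K * a n} < \<delta>)"

end

theory Submission
  imports Defs
begin

text \<open>Write \<open>Z = S X\<close> with \<open>S = \<Sigma>\<^sup>1\<^sup>/\<^sup>2\<close>. The map \<open>x \<mapsto> \<surd>((Sx)\<^sup>T Q (Sx))\<close> is a seminorm,
  hence convex, and it is \<open>\<surd>\<parallel>Q\<Sigma>\<parallel>\<close>-Lipschitz because \<open>\<parallel>S Q S\<parallel> \<le> \<parallel>Q\<Sigma>\<parallel>\<close> (the self-adjoint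
  \<open>SQS\<close> has norm at most the spectral radius of \<open>Q\<Sigma> = Q S S\<close>). The concentration hypothesis
  therefore gives each \<open>\<surd>(Z\<^sub>i\<^sup>T Q\<^sub>i Z\<^sub>i)\<close> a sub-Gaussian tail of scale \<open>r\<^sub>i = \<surd>\<parallel>Q\<^sub>i\<Sigma>\<^sub>i/c\<^sub>i\<parallel>\<close>
  around a median; integrating the tail bounds the distance between median and mean by
  \<open>2 r\<^sub>i\<close> and the variance by \<open>3 r\<^sub>i\<^sup>2\<close>, while \<open>E Z\<^sub>i\<^sup>T Q\<^sub>i Z\<^sub>i = tr(\<Sigma>\<^sub>i Q\<^sub>i)\<close>. A union bound over
  the \<open>n\<close> vectors at level \<open>4 max r\<^sub>i \<surd>log n\<close> costs \<open>n \<cdot> 2n\<^sup>-\<^sup>4\<close>, and squaring the resulting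
  uniform bound gives the statement about the quadratic forms.\<close>

definition vec_inner :: "nat \<Rightarrow> (nat \<Rightarrow> real) \<Rightarrow> (nat \<Rightarrow> real) \<Rightarrow> real" where
  "vec_inner p x y = (\<Sum>j<p. x j * y j)"

lemma enorm_nonneg: "enorm p x \<ge> 0"
  unfolding enorm_def by (simp add: sum_nonneg)

lemma enorm_power2: "(enorm p x)\<^sup>2 = (\<Sum>j<p. (x j)\<^sup>2)"
  unfolding enorm_def by (simp add: sum_nonneg)

lemma enorm_power2_eq_vec_inner: "(enorm p x)\<^sup>2 = vec_inner p x x"
  unfolding enorm_power2 vec_inner_def by (simp add: power2_eq_square)

lemma enorm_scale: "enorm p (\<lambda>j. a * x j) = \<bar>a\<bar> * enorm p x"
  unfolding enorm_def
  by (simp add: power_mult_distrib sum_distrib_left[symmetric] real_sqrt_mult)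

lemma abs_vec_inner_le: "\<bar>vec_inner p x y\<bar> \<le> enorm p x * enorm p y"
proof -
  have "(vec_inner p x y)\<^sup>2 \<le> (\<Sum>j<p. (x j)\<^sup>2) * (\<Sum>j<p. (y j)\<^sup>2)"
    unfolding vec_inner_def by (rule Cauchy_Schwarz_ineq_sum)
  also have "\<dots> = (enorm p x * enorm p y)\<^sup>2"
    by (simp add: enorm_power2 power_mult_distrib)
  finally show ?thesis
    using abs_le_square_iff[of "vec_inner p x y" "enorm p x * enorm p y"]
    by (simp add: enorm_nonneg)
qed

lemma vec_inner_le: "vec_inner p x y \<le> enorm p x * enorm p y"
  using abs_vec_inner_le[of p x y] by linarith

lemma mat_vec_cong: "(\<And>j. j < p \<Longrightarrow> x j = y j) \<Longrightarrow> mat_vec p A x = mat_vec p A y"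
  unfolding mat_vec_def by (intro ext sum.cong) auto

lemma mat_vec_lincomb:
  "mat_vec p A (\<lambda>j. a * x j + b * y j) = (\<lambda>j. a * mat_vec p A x j + b * mat_vec p A y j)"
  unfolding mat_vec_def by (simp add: sum.distrib sum_distrib_left algebra_simps)

lemma mat_vec_diff: "mat_vec p A (\<lambda>j. x j - y j) = (\<lambda>j. mat_vec p A x j - mat_vec p A y j)"
  unfolding mat_vec_def by (simp add: sum_subtractf algebra_simps)

lemma mat_vec_scale: "mat_vec p A (\<lambda>k. a * x k) = (\<lambda>j. a * mat_vec p A x j)"
  unfolding mat_vec_def by (simp add: sum_distrib_left mult.left_commute)

lemma mat_vec_mat_mult: "mat_vec p (mat_mult p A B) x = mat_vec p A (mat_vec p B x)"
proof
  fix j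
  have "mat_vec p (mat_mult p A B) x j = (\<Sum>k<p. \<Sum>l<p. A j l * B l k * x k)"
    unfolding mat_vec_def mat_mult_def by (simp add: sum_distrib_right)
  also have "\<dots> = (\<Sum>l<p. \<Sum>k<p. A j l * B l k * x k)" by (rule sum.swap)
  also have "\<dots> = mat_vec p A (mat_vec p B x) j"
    unfolding mat_vec_def by (simp add: sum_distrib_left mult.assoc)
  finally show "mat_vec p (mat_mult p A B) x j = mat_vec p A (mat_vec p B x) j" .
qed

lemma quad_form_eq_vec_inner: "quad_form p A x = vec_inner p x (mat_vec p A x)"
  unfolding quad_form_def vec_inner_def mat_vec_def by (simp add: sum_distrib_left mult.assoc)

lemma quad_form_cong: "(\<And>j. j < p \<Longrightarrow> x j = y j) \<Longrightarrow> quad_form p A x = quad_form p A y"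
  unfolding quad_form_def by simp

lemma vec_inner_mat_vec_symmetric:
  assumes "mat_symmetric p A"
  shows "vec_inner p x (mat_vec p A y) = vec_inner p (mat_vec p A x) y"
proof -
  have "vec_inner p x (mat_vec p A y) = (\<Sum>j<p. \<Sum>k<p. x j * A j k * y k)"
    unfolding vec_inner_def mat_vec_def by (simp add: sum_distrib_left mult.assoc)
  also have "\<dots> = (\<Sum>k<p. \<Sum>j<p. x j * A j k * y k)" by (rule sum.swap)
  also have "\<dots> = (\<Sum>k<p. \<Sum>j<p. A k j * x j * y k)"
    using assms unfolding mat_symmetric_def by (intro sum.cong refl) (auto simp: mult.commute)
  also have "\<dots> = vec_inner p (mat_vec p A x) y"
    unfolding vec_inner_def mat_vec_def by (simp add: sum_distrib_right)
  finally show ?thesis .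
qed

lemma enorm_mat_vec_le_frobenius:
  "(enorm p (mat_vec p A x))\<^sup>2 \<le> (\<Sum>j<p. \<Sum>k<p. (A j k)\<^sup>2) * (enorm p x)\<^sup>2"
proof -
  have "(enorm p (mat_vec p A x))\<^sup>2 = (\<Sum>j<p. (\<Sum>k<p. A j k * x k)\<^sup>2)"
    unfolding enorm_power2 mat_vec_def ..
  also have "\<dots> \<le> (\<Sum>j<p. (\<Sum>k<p. (A j k)\<^sup>2) * (\<Sum>k<p. (x k)\<^sup>2))"
    by (intro sum_mono Cauchy_Schwarz_ineq_sum)
  also have "\<dots> = (\<Sum>j<p. \<Sum>k<p. (A j k)\<^sup>2) * (enorm p x)\<^sup>2"
    by (simp add: enorm_power2 sum_distrib_right)
  finally show ?thesis .
qed

lemma op_norm_bdd_above: "bdd_above {enorm p (mat_vec p A x) | x. enorm p x \<le> 1}"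
proof -
  define F where "F = (\<Sum>j<p. \<Sum>k<p. (A j k)\<^sup>2)"
  have F: "F \<ge> 0" unfolding F_def by (intro sum_nonneg) auto
  have "y \<le> sqrt F" if "y \<in> {enorm p (mat_vec p A x) | x. enorm p x \<le> 1}" for y
  proof -
    from that obtain x where y: "y = enorm p (mat_vec p A x)" and x: "enorm p x \<le> 1" by auto
    have "y\<^sup>2 \<le> F * (enorm p x)\<^sup>2"
      unfolding y F_def by (rule enorm_mat_vec_le_frobenius)
    also have "\<dots> \<le> F"
      using x F enorm_nonneg[of p x] by (simp add: mult_left_le power_le_one)
    finally show ?thesis using F by (simp add: real_le_rsqrt)
  qed
  then show ?thesis by (rule bdd_aboveI)
qed

lemma enorm_mat_vec_le_op_norm: "enorm p (mat_vec p A x) \<le> op_norm p A * enorm p x"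
proof (cases "enorm p x = 0")
  case True
  then have "(enorm p (mat_vec p A x))\<^sup>2 \<le> 0"
    using enorm_mat_vec_le_frobenius[of p A x] by simp
  then show ?thesis using True by simp
next
  case False
  then have pos: "enorm p x > 0" using enorm_nonneg[of p x] by simp
  define y where "y = (\<lambda>j. x j / enorm p x)"
  have "enorm p y = 1"
    using enorm_scale[of p "1 / enorm p x" x] pos by (simp add: y_def)
  then have "enorm p (mat_vec p A y) \<le> op_norm p A"
    unfolding op_norm_def by (intro cSup_upper[OF _ op_norm_bdd_above]) auto
  moreover have "enorm p (mat_vec p A y) = enorm p (mat_vec p A x) / enorm p x"
    using mat_vec_scale[of p A "1 / enorm p x" x] enorm_scale[of p "1 / enorm p x"] pos
    by (simp add: y_def)
  ultimately show ?thesis using pos by (simp add: divide_le_eq)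
qed

lemma op_norm_nonneg: "op_norm p A \<ge> 0"
proof -
  have "enorm p (mat_vec p A (\<lambda>_. 0)) \<le> op_norm p A"
    unfolding op_norm_def by (rule cSup_upper[OF _ op_norm_bdd_above]) (auto simp: enorm_def)
  then show ?thesis using enorm_nonneg order_trans by blast
qed

lemma vec_inner_funpow_selfadjoint:
  assumes adj: "\<And>x y. vec_inner p x (f y) = vec_inner p (f x) y"
  shows "vec_inner p ((f^^N) x) ((f^^N) y) = vec_inner p x ((f^^(2 * N)) y)"
proof (induction N arbitrary: y)
  case 0
  then show ?case by simp
next
  case (Suc N)
  have "vec_inner p ((f^^Suc N) x) ((f^^Suc N) y) = vec_inner p ((f^^N) x) (f ((f^^Suc N) y))"
    by (simp add: adj)
  also have "f ((f^^Suc N) y) = (f^^N) ((f^^2) y)"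
    by (simp add: funpow_swap1 numeral_2_eq_2)
  also have "vec_inner p ((f^^N) x) ((f^^N) ((f^^2) y)) = vec_inner p x ((f^^(2 * N)) ((f^^2) y))"
    by (rule Suc.IH)
  also have "(f^^(2 * N)) ((f^^2) y) = (f^^(2 * Suc N)) y"
    by (simp add: funpow_add[symmetric, THEN fun_cong, simplified])
  finally show ?case .
qed

lemma enorm_power_le_funpow:
  assumes adj: "\<And>x y. vec_inner p x (f y) = vec_inner p (f x) y"
  shows "(enorm p (f x)) ^ (2 ^ m) \<le> (enorm p x) ^ (2 ^ m - 1) * enorm p ((f^^(2 ^ m)) x)"
proof (induction m)
  case 0
  then show ?case by simp
next
  case (Suc m)
  define N :: nat where "N = 2 ^ m"
  have N1: "N \<ge> 1" and N2: "2 ^ Suc m = 2 * N" by (simp_all add: N_def)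
  then have N3: "2 ^ Suc m - 1 = 2 * (N - 1) + 1" by arith
  have sq: "(enorm p ((f^^N) x))\<^sup>2 \<le> enorm p x * enorm p ((f^^(2 * N)) x)"
    using vec_inner_funpow_selfadjoint[OF adj, of N x x] vec_inner_le[of p x "(f^^(2 * N)) x"]
    by (simp add: enorm_power2_eq_vec_inner)
  have "(enorm p (f x)) ^ (2 ^ Suc m) = ((enorm p (f x)) ^ N)\<^sup>2"
    unfolding N2 by (simp add: power_mult mult.commute)
  also have "\<dots> \<le> ((enorm p x) ^ (N - 1) * enorm p ((f^^N) x))\<^sup>2"
    using Suc.IH unfolding N_def by (intro power_mono) (auto simp: enorm_nonneg)
  also have "\<dots> = (enorm p x) ^ (2 * (N - 1)) * (enorm p ((f^^N) x))\<^sup>2"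
    by (simp add: power_mult_distrib power_mult[symmetric] mult.commute)
  also have "\<dots> \<le> (enorm p x) ^ (2 * (N - 1)) * (enorm p x * enorm p ((f^^(2 * N)) x))"
    by (intro mult_left_mono sq) (simp add: enorm_nonneg)
  also have "\<dots> = (enorm p x) ^ (2 ^ Suc m - 1) * enorm p ((f^^(2 ^ Suc m)) x)"
    unfolding N3 unfolding N2 by (simp add: mult_ac)
  finally show ?case .
qed

text \<open>By the previous lemma \<open>\<parallel>f x\<parallel>^N \<le> C \<rho>^(N-1) \<parallel>x\<parallel>^N\<close> for every \<open>N = 2^m\<close>;
  taking \<open>N\<close>-th roots and letting \<open>m \<rightarrow> \<infinity>\<close> leaves \<open>\<parallel>f x\<parallel> \<le> \<rho> \<parallel>x\<parallel>\<close>.\<close>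

lemma selfadjoint_enorm_le_of_funpow_bound:
  assumes adj: "\<And>x y. vec_inner p x (f y) = vec_inner p (f x) y"
    and bound: "\<And>k x. enorm p ((f^^Suc k) x) \<le> C * \<rho> ^ k * enorm p x"
    and "\<rho> \<ge> 0"
  shows "enorm p (f x) \<le> \<rho> * enorm p x"
proof (rule ccontr)
  define a where "a = enorm p (f x)"
  define u where "u = enorm p x"
  assume "\<not> enorm p (f x) \<le> \<rho> * enorm p x"
  then have a_gt: "a > \<rho> * u" by (simp add: a_def u_def)
  have u: "u \<ge> 0" unfolding u_def by (rule enorm_nonneg)
  have key: "a ^ N \<le> C * \<rho> ^ (N - 1) * u ^ N" if N: "N = 2 ^ m" for m N
  proof -
    have "N \<noteq> 0" using N by simp
    then obtain k where k: "N = Suc k" using not0_implies_Suc by blast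
    have "a ^ N \<le> u ^ (N - 1) * enorm p ((f^^N) x)"
      unfolding a_def u_def N by (rule enorm_power_le_funpow[OF adj])
    also have "\<dots> \<le> u ^ (N - 1) * (C * \<rho> ^ (N - 1) * u)"
      using bound[of "N - 1" x] N by (intro mult_left_mono) (simp_all add: u_def enorm_nonneg)
    also have "\<dots> = C * \<rho> ^ (N - 1) * u ^ N"
      by (simp add: k algebra_simps)
    finally show ?thesis .
  qed
  show False
  proof (cases "\<rho> = 0 \<or> u = 0")
    case True
    then have "a ^ 2 \<le> 0 \<or> a \<le> 0" using key[of 2 1] key[of 1 0] by auto
    moreover have "a > 0" using a_gt True u by auto
    ultimately show False by (meson not_le zero_less_power)
  next
    case False
    then have pos: "\<rho> > 0" "u > 0" using \<open>\<rho> \<ge> 0\<close> u by auto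
    define q where "q = a / (\<rho> * u)"
    have q: "q > 1" using a_gt pos by (simp add: q_def)
    obtain m where m: "C / \<rho> < q ^ m" using real_arch_pow[OF q] by blast
    have "q ^ (2 ^ m) * \<rho> ^ (2 ^ m) * u ^ (2 ^ m) \<le> C * \<rho> ^ (2 ^ m - 1) * u ^ (2 ^ m)"
      using key[of "2 ^ m" m] pos by (simp add: q_def power_divide power_mult_distrib)
    then have "q ^ (2 ^ m) * \<rho> ^ (2 ^ m - 1) * \<rho> \<le> C * \<rho> ^ (2 ^ m - 1)"
      using pos by (simp add: power_eq_if[of \<rho> "2 ^ m"] mult_ac)
    then have "q ^ (2 ^ m) \<le> C / \<rho>" using pos by (simp add: le_divide_eq mult_ac)
    moreover have "q ^ m \<le> q ^ (2 ^ m)"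
      using q by (intro power_increasing) (simp_all add: less_imp_le)
    ultimately show False using m by simp
  qed
qed

lemma enorm_funpow_mat_vec_le: "enorm p ((mat_vec p A ^^ k) y) \<le> op_norm p A ^ k * enorm p y"
proof (induction k)
  case (Suc k)
  have "enorm p (mat_vec p A ((mat_vec p A ^^ k) y)) \<le> op_norm p A * enorm p ((mat_vec p A ^^ k) y)"
    by (rule enorm_mat_vec_le_op_norm)
  also have "\<dots> \<le> op_norm p A * (op_norm p A ^ k * enorm p y)"
    by (intro mult_left_mono Suc.IH op_norm_nonneg)
  finally show ?case by (simp add: mult.assoc)
qed simp

text \<open>For \<open>\<Sigma> = S\<^sup>2\<close> the powers of the self-adjoint map \<open>S Q S\<close> factor through
  \<open>(Q\<Sigma>)^k\<close>, so the non-symmetric product \<open>Q\<Sigma>\<close> controls the form \<open>x \<mapsto> (Sx)\<^sup>T Q (Sx)\<close>.\<close>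

lemma enorm_funpow_SQS_le:
  assumes Sig: "\<forall>j<p. \<forall>k<p. Sig j k = mat_mult p S S j k"
  shows "enorm p (((mat_vec p S \<circ> mat_vec p Q \<circ> mat_vec p S) ^^ Suc k) y)
    \<le> op_norm p S * op_norm p Q * op_norm p S * op_norm p (mat_mult p Q Sig) ^ k * enorm p y"
proof -
  define g where "g = mat_vec p Q \<circ> mat_vec p S \<circ> mat_vec p S"
  have "mat_vec p (mat_mult p Q Sig) = g"
  proof
    fix y
    have "mat_vec p Q (mat_vec p Sig y) = mat_vec p Q (mat_vec p (mat_mult p S S) y)"
      using Sig by (intro mat_vec_cong) (simp add: mat_vec_def)
    then show "mat_vec p (mat_mult p Q Sig) y = g y"
      by (simp add: g_def mat_vec_mat_mult)
  qed
  moreover have "((mat_vec p S \<circ> mat_vec p Q \<circ> mat_vec p S) ^^ Suc k) y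
      = mat_vec p S ((g ^^ k) (mat_vec p Q (mat_vec p S y)))"
    by (induction k) (simp_all add: g_def)
  ultimately have "enorm p (((mat_vec p S \<circ> mat_vec p Q \<circ> mat_vec p S) ^^ Suc k) y)
      \<le> op_norm p S * (op_norm p (mat_mult p Q Sig) ^ k * enorm p (mat_vec p Q (mat_vec p S y)))"
    by (metis enorm_funpow_mat_vec_le enorm_mat_vec_le_op_norm mult_left_mono op_norm_nonneg
        order_trans)
  also have "\<dots> \<le> op_norm p S * (op_norm p (mat_mult p Q Sig) ^ k * (op_norm p Q * (op_norm p S * enorm p y)))"
    by (intro mult_left_mono order_trans[OF enorm_mat_vec_le_op_norm] enorm_mat_vec_le_op_norm
        op_norm_nonneg zero_le_power)
  finally show ?thesis by (simp add: mult_ac)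
qed

lemma quad_form_mat_vec_le_op_norm:
  assumes S: "mat_symmetric p S" and Q: "mat_symmetric p Q"
    and Sig: "\<forall>j<p. \<forall>k<p. Sig j k = mat_mult p S S j k"
  shows "quad_form p Q (mat_vec p S x) \<le> op_norm p (mat_mult p Q Sig) * (enorm p x)\<^sup>2"
proof -
  define f where "f = mat_vec p S \<circ> mat_vec p Q \<circ> mat_vec p S"
  define \<rho> where "\<rho> = op_norm p (mat_mult p Q Sig)"
  have adj: "vec_inner p x (f y) = vec_inner p (f x) y" for x y
    unfolding f_def
    by (simp add: vec_inner_mat_vec_symmetric[OF S] vec_inner_mat_vec_symmetric[OF Q])
  have f: "enorm p (f x) \<le> \<rho> * enorm p x"
    using enorm_funpow_SQS_le[OF Sig] op_norm_nonneg unfolding f_def \<rho>_def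
    by (intro selfadjoint_enorm_le_of_funpow_bound[OF adj[unfolded f_def]])
  have "quad_form p Q (mat_vec p S x) = vec_inner p x (f x)"
    by (simp add: f_def quad_form_eq_vec_inner vec_inner_mat_vec_symmetric[OF S])
  also have "\<dots> \<le> enorm p x * (\<rho> * enorm p x)"
    by (intro order_trans[OF vec_inner_le] mult_left_mono f enorm_nonneg)
  finally show ?thesis by (simp add: \<rho>_def power2_eq_square mult_ac)
qed

definition bilin_form :: "nat \<Rightarrow> (nat \<Rightarrow> nat \<Rightarrow> real) \<Rightarrow> (nat \<Rightarrow> real) \<Rightarrow> (nat \<Rightarrow> real) \<Rightarrow> real" where
  "bilin_form p Q v w = (\<Sum>j<p. \<Sum>k<p. v j * Q j k * w k)"

lemma pos_semidef_if_pos_def: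
  assumes "pos_def p Q"
  shows "pos_semidef p Q"
proof -
  have "quad_form p Q x \<ge> 0" for x
  proof (cases "\<exists>j<p. x j \<noteq> 0")
    case True
    then show ?thesis using assms by (simp add: pos_def_def less_imp_le)
  next
    case False
    then show ?thesis by (simp add: quad_form_def)
  qed
  then show ?thesis using assms by (simp add: pos_def_def pos_semidef_def)
qed

lemma bilin_form_commute:
  assumes "mat_symmetric p Q"
  shows "bilin_form p Q v w = bilin_form p Q w v"
proof -
  have "bilin_form p Q v w = (\<Sum>k<p. \<Sum>j<p. v j * Q j k * w k)"
    unfolding bilin_form_def by (rule sum.swap)
  also have "\<dots> = bilin_form p Q w v"
    using assms unfolding bilin_form_def mat_symmetric_def
    by (intro sum.cong refl) (auto simp: mult.commute mult.left_commute)
  finally show ?thesis .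
qed

lemma quad_form_lincomb:
  assumes "mat_symmetric p Q"
  shows "quad_form p Q (\<lambda>j. a * v j + b * w j)
     = a\<^sup>2 * quad_form p Q v + 2 * a * b * bilin_form p Q v w + b\<^sup>2 * quad_form p Q w"
proof -
  have "quad_form p Q (\<lambda>j. a * v j + b * w j)
     = a\<^sup>2 * quad_form p Q v + a * b * bilin_form p Q v w + a * b * bilin_form p Q w v
       + b\<^sup>2 * quad_form p Q w"
    unfolding quad_form_def bilin_form_def
    by (simp add: algebra_simps power2_eq_square sum.distrib sum_distrib_left)
  then show ?thesis using bilin_form_commute[OF assms, of w v] by simp
qed

lemma bilin_form_power2_le:
  assumes "pos_semidef p Q"
  shows "(bilin_form p Q v w)\<^sup>2 \<le> quad_form p Q v * quad_form p Q w"
proof -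
  define b where "b = bilin_form p Q v w"
  have sym: "mat_symmetric p Q" and nonneg: "\<And>y. quad_form p Q y \<ge> 0"
    using assms by (simp_all add: pos_semidef_def)
  have discr: "0 \<le> quad_form p Q v + 2 * t * b + t\<^sup>2 * quad_form p Q w" for t
    using nonneg[of "\<lambda>j. 1 * v j + t * w j"] quad_form_lincomb[OF sym, of 1 v t w]
    by (simp add: b_def)
  show ?thesis
  proof (cases "quad_form p Q w = 0")
    case True
    have "b = 0"
    proof (rule ccontr)
      assume "b \<noteq> 0"
      then have "quad_form p Q v + 2 * (- (quad_form p Q v + 1) / (2 * b)) * b = -1"
        by (simp add: field_simps)
      then show False using discr[of "- (quad_form p Q v + 1) / (2 * b)"] True by simp
    qed
    then show ?thesis using True by (simp add: b_def)
  next
    case False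
    then have pos: "quad_form p Q w > 0" using nonneg[of w] by simp
    have "0 \<le> quad_form p Q v + 2 * (- b / quad_form p Q w) * b
                + (- b / quad_form p Q w)\<^sup>2 * quad_form p Q w"
      by (rule discr)
    also have "\<dots> = quad_form p Q v - b\<^sup>2 / quad_form p Q w"
      using pos by (simp add: field_simps power2_eq_square)
    finally show ?thesis using pos by (simp add: b_def divide_le_eq)
  qed
qed

lemma bilin_form_le_sqrt_quad_form:
  assumes "pos_semidef p Q"
  shows "bilin_form p Q v w \<le> sqrt (quad_form p Q v) * sqrt (quad_form p Q w)"
proof -
  have "bilin_form p Q v w \<le> sqrt ((bilin_form p Q v w)\<^sup>2)" by simp
  also have "\<dots> \<le> sqrt (quad_form p Q v * quad_form p Q w)"
    by (intro real_sqrt_le_mono bilin_form_power2_le assms)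
  finally show ?thesis by (simp add: real_sqrt_mult)
qed

lemma sqrt_quad_form_convex:
  assumes Q: "pos_semidef p Q" and "a \<ge> 0" "b \<ge> 0"
  shows "sqrt (quad_form p Q (\<lambda>j. a * v j + b * w j))
        \<le> a * sqrt (quad_form p Q v) + b * sqrt (quad_form p Q w)"
proof -
  have sym: "mat_symmetric p Q" and nonneg: "\<And>y. quad_form p Q y \<ge> 0"
    using Q by (simp_all add: pos_semidef_def)
  have "2 * a * b * bilin_form p Q v w
      \<le> 2 * a * b * (sqrt (quad_form p Q v) * sqrt (quad_form p Q w))"
    using assms by (intro mult_left_mono bilin_form_le_sqrt_quad_form) auto
  then have "quad_form p Q (\<lambda>j. a * v j + b * w j)
      \<le> (a * sqrt (quad_form p Q v) + b * sqrt (quad_form p Q w))\<^sup>2"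
    unfolding quad_form_lincomb[OF sym]
    using nonneg[of v] nonneg[of w] by (simp add: power2_eq_square algebra_simps)
  then show ?thesis
    using assms nonneg by (intro real_le_lsqrt) auto
qed

lemma abs_sqrt_quad_form_diff_le:
  assumes Q: "pos_semidef p Q"
  shows "\<bar>sqrt (quad_form p Q v) - sqrt (quad_form p Q w)\<bar> \<le> sqrt (quad_form p Q (\<lambda>j. v j - w j))"
proof -
  have sym: "mat_symmetric p Q" and nonneg: "\<And>y. quad_form p Q y \<ge> 0"
    using Q by (simp_all add: pos_semidef_def)
  have "quad_form p Q (\<lambda>j. v j - w j) = quad_form p Q (\<lambda>j. 1 * v j + (-1) * w j)" by simp
  then have "(sqrt (quad_form p Q v) - sqrt (quad_form p Q w))\<^sup>2 \<le> quad_form p Q (\<lambda>j. v j - w j)"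
    using bilin_form_le_sqrt_quad_form[OF Q, of v w] nonneg[of v] nonneg[of w]
    unfolding quad_form_lincomb[OF sym] by (simp add: power2_eq_square algebra_simps)
  then show ?thesis by (metis real_sqrt_abs real_sqrt_le_mono)
qed

lemma quad_form_mat_vec:
  "quad_form p Q (mat_vec p S x) = (\<Sum>a<p. \<Sum>b<p. x a * x b * (\<Sum>j<p. \<Sum>k<p. S j a * Q j k * S k b))"
proof -
  have "quad_form p Q (mat_vec p S x)
      = (\<Sum>j<p. \<Sum>k<p. \<Sum>a<p. \<Sum>b<p. x a * x b * (S j a * Q j k * S k b))"
    unfolding quad_form_def mat_vec_def
    by (simp add: sum_distrib_left sum_distrib_right mult_ac)
  also have "\<dots> = (\<Sum>j<p. \<Sum>a<p. \<Sum>b<p. \<Sum>k<p. x a * x b * (S j a * Q j k * S k b))"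
    by (rule sum.cong[OF refl], subst sum.swap, rule sum.cong[OF refl], rule sum.swap)
  also have "\<dots> = (\<Sum>a<p. \<Sum>b<p. \<Sum>j<p. \<Sum>k<p. x a * x b * (S j a * Q j k * S k b))"
    by (subst sum.swap, rule sum.cong[OF refl], rule sum.swap)
  finally show ?thesis by (simp add: sum_distrib_left)
qed

lemma mat_trace_mat_mult_square:
  assumes S: "mat_symmetric p S" and Sig: "\<forall>j<p. \<forall>k<p. Sig j k = mat_mult p S S j k"
  shows "mat_trace p (mat_mult p Sig Q) = (\<Sum>a<p. \<Sum>j<p. \<Sum>k<p. S j a * Q j k * S k a)"
proof -
  have "mat_trace p (mat_mult p Sig Q) = (\<Sum>k<p. \<Sum>j<p. \<Sum>a<p. S j a * Q j k * S k a)"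
    using Sig S unfolding mat_trace_def mat_mult_def mat_symmetric_def
    by (intro sum.cong refl) (simp add: sum_distrib_left sum_distrib_right mult_ac)
  also have "\<dots> = (\<Sum>j<p. \<Sum>a<p. \<Sum>k<p. S j a * Q j k * S k a)"
    by (subst sum.swap, rule sum.cong[OF refl], rule sum.swap)
  also have "\<dots> = (\<Sum>a<p. \<Sum>j<p. \<Sum>k<p. S j a * Q j k * S k a)"
    by (rule sum.swap)
  finally show ?thesis .
qed

lemma (in real_distribution) median_exists:
  "\<exists>m. measure M {..m} \<ge> 1/2 \<and> measure M {m..} \<ge> 1/2"
proof -
  define A where "A = {x. cdf M x \<ge> 1/2}"
  have "\<forall>\<^sub>F x in at_top. cdf M x > 1/2"
    using cdf_lim_at_top_prob by (rule order_tendstoD) simp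
  then obtain a where "a \<in> A"
    unfolding A_def by (metis (mono_tags) eventually_at_top_linorder less_eq_real_def mem_Collect_eq order_refl)
  have "\<forall>\<^sub>F x in at_bot. cdf M x < 1/2"
    using cdf_lim_at_bot by (rule order_tendstoD) simp
  then obtain b where b: "\<And>x. x \<le> b \<Longrightarrow> cdf M x < 1/2"
    unfolding eventually_at_bot_linorder by blast
  have "b \<le> x" if "x \<in> A" for x
    using that b[of x] by (cases "x \<le> b") (auto simp: A_def)
  then have "bdd_below A" by (rule bdd_belowI)
  define m where "m = Inf A"
  have "cdf M m \<ge> 1/2"
  proof (rule tendsto_lowerbound[OF _ _ trivial_limit_at_right_real])
    show "(cdf M \<longlongrightarrow> cdf M m) (at_right m)"
      using cdf_is_right_cont by (simp add: continuous_within)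
    have ge: "cdf M x \<ge> 1/2" if "x > m" for x
    proof -
      obtain a' where "a' \<in> A" "a' < x"
        using \<open>x > m\<close> \<open>a \<in> A\<close> by (metis cInf_lessD empty_iff m_def)
      then show ?thesis using cdf_nondecreasing[of a' x] by (simp add: A_def)
    qed
    show "\<forall>\<^sub>F x in at_right m. cdf M x \<ge> 1/2"
      by (rule eventually_mono[OF eventually_at_right_less ge])
  qed
  moreover have "measure M {..<m} \<le> 1/2"
  proof (rule tendsto_upperbound[OF cdf_at_left _ trivial_limit_at_left_real])
    have le: "cdf M x \<le> 1/2" if "x < m" for x
      using that cInf_lower[OF _ \<open>bdd_below A\<close>, of x] by (force simp: A_def m_def)
    show "\<forall>\<^sub>F x in at_left m. cdf M x \<le> 1/2"
      by (rule eventually_at_leftI[of "m - 1"], rule le) auto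
  qed
  moreover have "measure M {m..} = 1 - measure M {..<m}"
    using prob_compl[of "{..<m}"] by (simp add: Compl_eq_Diff_UNIV[symmetric] not_less)
  ultimately show ?thesis by (intro exI[of _ m]) (simp add: cdf_def)
qed

lemma (in prob_space) median_exists:
  assumes [measurable]: "Y \<in> borel_measurable M"
  shows "\<exists>m. is_median M Y m"
proof -
  interpret D: real_distribution "distr M borel Y" by simp
  obtain m where "measure (distr M borel Y) {..m} \<ge> 1/2" "measure (distr M borel Y) {m..} \<ge> 1/2"
    using D.median_exists by blast
  then show ?thesis
    by (intro exI[of _ m]) (simp add: is_median_def measure_distr vimage_def Int_def conj_commute)
qed

lemma ennreal_le_1_plus_suminf_less:
  "ennreal x \<le> 1 + (\<Sum>k. if real (Suc k) < x then 1 else 0)"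
proof -
  define N where "N = nat \<lceil>x\<rceil> - 1"
  have "real (Suc k) < x" if "k < N" for k
  proof -
    have "int (Suc k) < \<lceil>x\<rceil>" using that by (simp add: N_def zless_nat_eq_int_zless)
    then show ?thesis by (simp add: less_ceiling_iff)
  qed
  then have N: "(of_nat N :: ennreal) = (\<Sum>k<N. if real (Suc k) < x then 1 else 0)" by simp
  have "x \<le> 1 + real N"
    unfolding N_def by linarith
  then have "ennreal x \<le> 1 + of_nat N"
    using ennreal_leI by (fastforce simp: ennreal_of_nat_eq_real_of_nat ennreal_plus[symmetric])
  also have "\<dots> \<le> 1 + (\<Sum>k. if real (Suc k) < x then 1 else 0)"
    unfolding N by (intro add_left_mono sum_le_suminf) auto
  finally show ?thesis .
qed

lemma suminf_ennreal_2_exp_neg_le: "(\<Sum>k. ennreal (2 * exp (- real (Suc k)))) \<le> 2"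
proof -
  define c :: real where "c = exp (- 1)"
  have c: "0 < c" "c \<le> 1/2"
    using exp_ge_add_one_self[of 1] by (simp_all add: c_def exp_minus field_simps)
  have "(\<lambda>k. 2 * c * c ^ k) sums (2 * c * (1 / (1 - c)))"
    using c by (intro sums_mult geometric_sums) simp
  moreover have "2 * c * c ^ k = 2 * exp (- real (Suc k))" for k
    by (simp add: c_def exp_of_nat_mult[symmetric] mult.assoc[symmetric] mult_exp_exp)
  ultimately have "(\<lambda>k. 2 * exp (- real (Suc k))) sums (2 * c / (1 - c))" by simp
  then have "(\<Sum>k. ennreal (2 * exp (- real (Suc k)))) = ennreal (2 * c / (1 - c))"
    by (intro suminf_ennreal_eq) auto
  also have "\<dots> \<le> ennreal 2"
    using c by (intro ennreal_leI) (simp add: field_simps)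
  finally show ?thesis by simp
qed

text \<open>Summing the tail bound over the events \<open>W\<^sup>2 > (k+1) r\<^sup>2\<close> gives
  \<open>E W\<^sup>2 / r\<^sup>2 \<le> 1 + \<Sum>\<^sub>k 2 e\<^sup>-\<^sup>(\<^sup>k\<^sup>+\<^sup>1\<^sup>) = 1 + 2 / (e - 1) \<le> 3\<close>.\<close>

lemma (in prob_space) expectation_power2_le_of_tail:
  assumes [measurable]: "W \<in> borel_measurable M"
    and nonneg: "\<And>\<omega>. \<omega> \<in> space M \<Longrightarrow> W \<omega> \<ge> 0" and "r > 0"
    and tail: "\<And>s. s > 0 \<Longrightarrow> prob {\<omega>\<in>space M. W \<omega> > s} \<le> 2 * exp (- (s\<^sup>2 / r\<^sup>2))"
  shows "expectation (\<lambda>\<omega>. (W \<omega>)\<^sup>2) \<le> 3 * r\<^sup>2"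
proof (cases "integrable M (\<lambda>\<omega>. (W \<omega>)\<^sup>2)")
  case False
  then show ?thesis by (simp add: not_integrable_integral_eq)
next
  case True
  define E where "E k = {\<omega>\<in>space M. real (Suc k) < (W \<omega>)\<^sup>2 / r\<^sup>2}" for k
  have [measurable]: "E k \<in> sets M" for k unfolding E_def by measurable
  have E: "prob (E k) \<le> 2 * exp (- real (Suc k))" for k
  proof -
    define s where "s = sqrt (real (Suc k)) * r"
    have s: "s > 0" "s\<^sup>2 = real (Suc k) * r\<^sup>2"
      using \<open>r > 0\<close> by (simp_all add: s_def power_mult_distrib)
    have "E k \<subseteq> {\<omega>\<in>space M. W \<omega> > s}"
    proof safe
      fix \<omega> assume "\<omega> \<in> E k"
      then have "\<omega> \<in> space M" "s\<^sup>2 < (W \<omega>)\<^sup>2"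
        using \<open>r > 0\<close> s by (auto simp: E_def less_divide_eq)
      then show "\<omega> \<in> space M" "s < W \<omega>"
        using nonneg power2_less_imp_less by blast+
    qed
    then have "prob (E k) \<le> prob {\<omega>\<in>space M. W \<omega> > s}" by (intro finite_measure_mono) auto
    then show ?thesis using tail[OF s(1)] s(2) \<open>r > 0\<close> by simp
  qed
  have "ennreal ((W \<omega>)\<^sup>2 / r\<^sup>2) \<le> 1 + (\<Sum>k. indicator (E k) \<omega>)" if "\<omega> \<in> space M" for \<omega>
    using ennreal_le_1_plus_suminf_less[of "(W \<omega>)\<^sup>2 / r\<^sup>2"] that
    by (simp add: E_def indicator_def of_bool_def)
  then have "(\<integral>\<^sup>+\<omega>. ennreal ((W \<omega>)\<^sup>2 / r\<^sup>2) \<partial>M) \<le> (\<integral>\<^sup>+\<omega>. 1 + (\<Sum>k. indicator (E k) \<omega>) \<partial>M)"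
    by (rule nn_integral_mono)
  also have "\<dots> = 1 + (\<Sum>k. ennreal (prob (E k)))"
    by (simp add: nn_integral_add nn_integral_suminf emeasure_eq_measure prob_space)
  also have "\<dots> \<le> 1 + (\<Sum>k. ennreal (2 * exp (- real (Suc k))))"
    by (intro add_left_mono suminf_le ennreal_leI E) auto
  also have "\<dots> \<le> 1 + 2"
    by (intro add_left_mono suminf_ennreal_2_exp_neg_le)
  finally have "(\<integral>\<^sup>+\<omega>. ennreal ((W \<omega>)\<^sup>2 / r\<^sup>2) \<partial>M) \<le> ennreal 3" by simp
  moreover have "(\<integral>\<^sup>+\<omega>. ennreal ((W \<omega>)\<^sup>2 / r\<^sup>2) \<partial>M) = ennreal (expectation (\<lambda>\<omega>. (W \<omega>)\<^sup>2) / r\<^sup>2)"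
    using True by (subst nn_integral_eq_integral) auto
  ultimately have "expectation (\<lambda>\<omega>. (W \<omega>)\<^sup>2) / r\<^sup>2 \<le> 3"
    by (metis ennreal_le_iff zero_le_numeral)
  then show ?thesis using \<open>r > 0\<close> by (simp add: divide_le_eq)
qed

lemma (in prob_space) expectation_power2_diff_const:
  fixes Y :: "'a \<Rightarrow> real"
  assumes [simp]: "integrable M Y" "integrable M (\<lambda>\<omega>. (Y \<omega>)\<^sup>2)"
  shows "expectation (\<lambda>\<omega>. (Y \<omega> - a)\<^sup>2) = (expectation Y - a)\<^sup>2 + variance Y"
proof -
  have "expectation (\<lambda>\<omega>. (Y \<omega> - a)\<^sup>2) = expectation (\<lambda>\<omega>. (Y \<omega>)\<^sup>2 - 2 * a * Y \<omega> + a\<^sup>2)"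
    by (simp add: power2_diff)
  also have "\<dots> = expectation (\<lambda>\<omega>. (Y \<omega>)\<^sup>2) - 2 * a * expectation Y + a\<^sup>2"
    by (simp add: Bochner_Integration.integral_add Bochner_Integration.integral_diff prob_space)
  finally show ?thesis
    unfolding variance_eq[OF assms] by (simp add: power2_diff)
qed

locale isotropic_concentrated_vector = prob_space M for M :: "'a measure" +
  fixes p :: nat and X :: "nat \<Rightarrow> 'a \<Rightarrow> real" and c :: real
  assumes X_measurable: "j < p \<Longrightarrow> X j \<in> borel_measurable M"
    and X_products_integrable: "j < p \<Longrightarrow> k < p \<Longrightarrow> integrable M (\<lambda>\<omega>. X j \<omega> * X k \<omega>)"
    and X_isotropic:
      "j < p \<Longrightarrow> k < p \<Longrightarrow> expectation (\<lambda>\<omega>. X j \<omega> * X k \<omega>) = (if j = k then 1 else 0)"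
    and c_pos: "c > 0"
    and X_concentration: "\<And>f m t. convex_lip1 p f \<Longrightarrow> is_median M (\<lambda>\<omega>. f (\<lambda>j. X j \<omega>)) m \<Longrightarrow>
      t > 0 \<Longrightarrow> prob {\<omega>\<in>space M. \<bar>f (\<lambda>j. X j \<omega>) - m\<bar> > t} \<le> 2 * exp (- c * t\<^sup>2)"
begin

lemma median_tail_of_convex_lipschitz:
  assumes meas: "(\<lambda>\<omega>. g (\<lambda>j. X j \<omega>)) \<in> borel_measurable M" and "L > 0"
    and lip: "\<And>x y. \<bar>g x - g y\<bar> \<le> L * enorm p (\<lambda>j. x j - y j)"
    and conv: "\<And>x y u. 0 \<le> u \<Longrightarrow> u \<le> 1 \<Longrightarrow>
      g (\<lambda>j. u * x j + (1 - u) * y j) \<le> u * g x + (1 - u) * g y"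
  shows "\<exists>m. \<forall>s>0. prob {\<omega>\<in>space M. \<bar>g (\<lambda>j. X j \<omega>) - m\<bar> > s} \<le> 2 * exp (- c * s\<^sup>2 / L\<^sup>2)"
proof -
  obtain m where m: "is_median M (\<lambda>\<omega>. g (\<lambda>j. X j \<omega>)) m"
    using median_exists[OF meas] by blast
  define f where "f x = g x / L" for x
  have "convex_lip1 p f"
    unfolding convex_lip1_def f_def using \<open>L > 0\<close> lip conv
    by (auto simp: diff_divide_distrib[symmetric] add_divide_distrib[symmetric] divide_le_eq
        mult.commute intro: divide_right_mono)
  moreover have "is_median M (\<lambda>\<omega>. f (\<lambda>j. X j \<omega>)) (m / L)"
    using m \<open>L > 0\<close> by (simp add: is_median_def f_def divide_le_cancel)
  ultimately have tail: "prob {\<omega>\<in>space M. \<bar>f (\<lambda>j. X j \<omega>) - m / L\<bar> > s / L} \<le> 2 * exp (- c * (s / L)\<^sup>2)"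
    if "s > 0" for s
    using X_concentration \<open>L > 0\<close> that by simp
  have "\<bar>f x - m / L\<bar> > s / L \<longleftrightarrow> \<bar>g x - m\<bar> > s" for x s
    using \<open>L > 0\<close> by (simp add: f_def diff_divide_distrib[symmetric] divide_less_cancel)
  then show ?thesis
    using tail by (intro exI[of _ m]) (simp add: power_divide)
qed

end

locale quadratic_form_of_isotropic = isotropic_concentrated_vector +
  fixes S Sig Q :: "nat \<Rightarrow> nat \<Rightarrow> real" and Z :: "nat \<Rightarrow> 'a \<Rightarrow> real"
  assumes S_psd: "pos_semidef p S"
    and Sig_square: "\<forall>j<p. \<forall>k<p. Sig j k = mat_mult p S S j k"
    and Q_psd: "pos_semidef p Q"
    and Z_eq: "\<omega> \<in> space M \<Longrightarrow> j < p \<Longrightarrow> Z j \<omega> = mat_vec p S (\<lambda>k. X k \<omega>) j"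
begin

abbreviation Q_norm :: "'a \<Rightarrow> real" where
  "Q_norm \<omega> \<equiv> sqrt (quad_form p Q (\<lambda>j. Z j \<omega>))"

abbreviation Q_scale :: real where
  "Q_scale \<equiv> sqrt (op_norm p (\<lambda>j k. mat_mult p Q Sig j k / c))"

abbreviation Q_trace :: real where
  "Q_trace \<equiv> mat_trace p (mat_mult p Sig Q)"

lemma Q_scale_nonneg: "Q_scale \<ge> 0"
  by (simp add: op_norm_nonneg)

lemma quad_form_nonneg: "quad_form p Q v \<ge> 0"
  using Q_psd by (simp add: pos_semidef_def)

lemma quad_form_Z: "\<omega> \<in> space M \<Longrightarrow> quad_form p Q (\<lambda>j. Z j \<omega>) = quad_form p Q (mat_vec p S (\<lambda>j. X j \<omega>))"
  by (intro quad_form_cong) (simp add: Z_eq)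

lemma quad_form_S_le: "quad_form p Q (mat_vec p S x) \<le> c * Q_scale\<^sup>2 * (enorm p x)\<^sup>2"
proof -
  have Q: "mat_symmetric p (\<lambda>j k. Q j k / c)"
    using Q_psd by (simp add: pos_semidef_def mat_symmetric_def)
  have "mat_mult p (\<lambda>j k. Q j k / c) Sig = (\<lambda>j k. mat_mult p Q Sig j k / c)"
    by (simp add: mat_mult_def sum_divide_distrib)
  then have "quad_form p (\<lambda>j k. Q j k / c) (mat_vec p S x) \<le> Q_scale\<^sup>2 * (enorm p x)\<^sup>2"
    using quad_form_mat_vec_le_op_norm[OF _ Q Sig_square] S_psd
    by (simp add: pos_semidef_def op_norm_nonneg)
  then show ?thesis
    using c_pos by (simp add: quad_form_def sum_divide_distrib[symmetric] divide_le_eq mult_ac)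
qed

lemma Q_norm_eq_0_if_Q_scale_eq_0: "Q_scale = 0 \<Longrightarrow> \<omega> \<in> space M \<Longrightarrow> Q_norm \<omega> = 0"
  using quad_form_S_le[of "\<lambda>j. X j \<omega>"] quad_form_nonneg[of "mat_vec p S (\<lambda>j. X j \<omega>)"]
  by (simp add: quad_form_Z)

lemma moments_Q_norm_if_Q_scale_eq_0:
  assumes "Q_scale = 0"
  shows "expectation Q_norm = 0" "variance Q_norm = 0"
proof -
  have "AE \<omega> in M. Q_norm \<omega> = 0"
    using Q_norm_eq_0_if_Q_scale_eq_0[OF assms] by (intro AE_I2) blast
  then show E: "expectation Q_norm = 0" by (rule integral_eq_zero_AE)
  show "variance Q_norm = 0"
    using \<open>AE \<omega> in M. Q_norm \<omega> = 0\<close> by (intro integral_eq_zero_AE) (auto simp: E)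
qed

lemma measurable_Q_norm [measurable]: "Q_norm \<in> borel_measurable M"
proof -
  have "(\<lambda>\<omega>. sqrt (quad_form p Q (mat_vec p S (\<lambda>j. X j \<omega>)))) \<in> borel_measurable M"
    unfolding quad_form_def mat_vec_def using X_measurable by measurable
  then show ?thesis by (rule measurable_cong[THEN iffD2, rotated]) (simp add: quad_form_Z)
qed

lemma expectation_Q_norm_power2:
  "integrable M (\<lambda>\<omega>. (Q_norm \<omega>)\<^sup>2) \<and> expectation (\<lambda>\<omega>. (Q_norm \<omega>)\<^sup>2) = Q_trace"
proof -
  define B where "B a b = (\<Sum>j<p. \<Sum>k<p. S j a * Q j k * S k b)" for a b
  have sq: "(Q_norm \<omega>)\<^sup>2 = (\<Sum>a<p. \<Sum>b<p. B a b * (X a \<omega> * X b \<omega>))" if "\<omega> \<in> space M" for \<omega>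
  proof -
    have "(Q_norm \<omega>)\<^sup>2 = quad_form p Q (mat_vec p S (\<lambda>j. X j \<omega>))"
      using that quad_form_nonneg by (simp add: quad_form_Z)
    then show ?thesis by (simp add: quad_form_mat_vec B_def mult_ac)
  qed
  have int_row: "integrable M (\<lambda>\<omega>. \<Sum>b<p. B a b * (X a \<omega> * X b \<omega>))" if "a < p" for a
    using that by (intro Bochner_Integration.integrable_sum Bochner_Integration.integrable_mult_right
        X_products_integrable) auto
  have int: "integrable M (\<lambda>\<omega>. \<Sum>a<p. \<Sum>b<p. B a b * (X a \<omega> * X b \<omega>))"
    by (rule Bochner_Integration.integrable_sum, rule int_row) auto
  have "expectation (\<lambda>\<omega>. \<Sum>a<p. \<Sum>b<p. B a b * (X a \<omega> * X b \<omega>))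
      = (\<Sum>a<p. expectation (\<lambda>\<omega>. \<Sum>b<p. B a b * (X a \<omega> * X b \<omega>)))"
    by (rule Bochner_Integration.integral_sum, rule int_row) auto
  also have "\<dots> = (\<Sum>a<p. \<Sum>b<p. B a b * expectation (\<lambda>\<omega>. X a \<omega> * X b \<omega>))"
    by (intro sum.cong refl, subst Bochner_Integration.integral_sum)
      (auto intro: Bochner_Integration.integrable_mult_right X_products_integrable)
  also have "\<dots> = (\<Sum>a<p. B a a)"
    by (intro sum.cong refl) (simp add: X_isotropic if_distrib[of "(*) (B _ _)"] cong: if_cong)
  also have "\<dots> = Q_trace"
    using mat_trace_mat_mult_square[OF _ Sig_square] S_psd by (simp add: B_def pos_semidef_def)
  finally show ?thesis
    using int sq by (simp add: Bochner_Integration.integrable_cong[OF refl sq] Bochner_Integration.integral_cong[OF refl sq])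
qed

lemma integrable_Q_norm: "integrable M Q_norm"
  by (rule square_integrable_imp_integrable) (use expectation_Q_norm_power2 in auto)

lemma variance_Q_norm: "variance Q_norm = Q_trace - (expectation Q_norm)\<^sup>2"
  using expectation_Q_norm_power2 integrable_Q_norm by (simp add: variance_eq)

lemma Q_norm_median_tail:
  assumes "Q_scale > 0"
  shows "\<exists>m. (\<forall>s>0. prob {\<omega>\<in>space M. \<bar>Q_norm \<omega> - m\<bar> > s} \<le> 2 * exp (- (s\<^sup>2 / Q_scale\<^sup>2)))
      \<and> (expectation Q_norm - m)\<^sup>2 + variance Q_norm \<le> 3 * Q_scale\<^sup>2"
proof -
  define g where "g x = sqrt (quad_form p Q (mat_vec p S x))" for x
  have "\<bar>g x - g y\<bar> \<le> sqrt c * Q_scale * enorm p (\<lambda>j. x j - y j)" for x y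
  proof -
    have "\<bar>g x - g y\<bar> \<le> sqrt (quad_form p Q (mat_vec p S (\<lambda>j. x j - y j)))"
      unfolding g_def mat_vec_diff by (rule abs_sqrt_quad_form_diff_le[OF Q_psd])
    also have "\<dots> \<le> sqrt (c * Q_scale\<^sup>2 * (enorm p (\<lambda>j. x j - y j))\<^sup>2)"
      by (intro real_sqrt_le_mono quad_form_S_le)
    finally show ?thesis
      using c_pos by (simp add: real_sqrt_mult enorm_nonneg op_norm_nonneg)
  qed
  moreover have "g (\<lambda>j. u * x j + (1 - u) * y j) \<le> u * g x + (1 - u) * g y"
    if "0 \<le> u" "u \<le> 1" for u x y
    unfolding g_def mat_vec_lincomb using that by (intro sqrt_quad_form_convex[OF Q_psd]) auto
  moreover have "(\<lambda>\<omega>. g (\<lambda>j. X j \<omega>)) \<in> borel_measurable M"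
    using measurable_Q_norm by (rule measurable_cong[THEN iffD1, rotated]) (simp add: g_def quad_form_Z)
  ultimately obtain m where
    "\<forall>s>0. prob {\<omega>\<in>space M. \<bar>g (\<lambda>j. X j \<omega>) - m\<bar> > s} \<le> 2 * exp (- c * s\<^sup>2 / (sqrt c * Q_scale)\<^sup>2)"
    using median_tail_of_convex_lipschitz[of g "sqrt c * Q_scale"] assms c_pos by auto
  moreover have "{\<omega>\<in>space M. \<bar>g (\<lambda>j. X j \<omega>) - m\<bar> > s} = {\<omega>\<in>space M. \<bar>Q_norm \<omega> - m\<bar> > s}" for s
    by (auto simp: g_def quad_form_Z)
  ultimately have tail: "\<forall>s>0. prob {\<omega>\<in>space M. \<bar>Q_norm \<omega> - m\<bar> > s} \<le> 2 * exp (- (s\<^sup>2 / Q_scale\<^sup>2))"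
    using c_pos by (simp add: power_mult_distrib)
  have "expectation (\<lambda>\<omega>. \<bar>Q_norm \<omega> - m\<bar>\<^sup>2) \<le> 3 * Q_scale\<^sup>2"
    using tail assms by (intro expectation_power2_le_of_tail) auto
  then show ?thesis
    using tail expectation_power2_diff_const[OF integrable_Q_norm, of m] expectation_Q_norm_power2
    by auto
qed

lemma Q_norm_expectation_bounds:
  "(expectation Q_norm)\<^sup>2 \<le> Q_trace" "Q_trace - (expectation Q_norm)\<^sup>2 \<le> 3 * Q_scale\<^sup>2"
proof -
  show "(expectation Q_norm)\<^sup>2 \<le> Q_trace"
    using variance_positive[of Q_norm] by (simp add: variance_Q_norm)
  show "Q_trace - (expectation Q_norm)\<^sup>2 \<le> 3 * Q_scale\<^sup>2"
  proof (cases "Q_scale = 0")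
    case True
    then show ?thesis
      using moments_Q_norm_if_Q_scale_eq_0(2)[OF True] variance_Q_norm by simp
  next
    case False
    then obtain m where "(expectation Q_norm - m)\<^sup>2 + variance Q_norm \<le> 3 * Q_scale\<^sup>2"
      using Q_norm_median_tail Q_scale_nonneg by fastforce
    then show ?thesis
      using zero_le_power2[of "expectation Q_norm - m"] variance_Q_norm by linarith
  qed
qed

text \<open>Mean and median of \<open>Q_norm\<close> differ by at most \<open>\<surd>3 Q_scale\<close>, so the deviation from
  the mean inherits the sub-Gaussian tail around the median with a shift \<open>2 Q_scale\<close>.\<close>

lemma Q_norm_deviation_tail:
  assumes "t > 0"
  shows "prob {\<omega>\<in>space M. \<bar>Q_norm \<omega> - expectation Q_norm\<bar> > (2 + t) * Q_scale} \<le> 2 * exp (- t\<^sup>2)"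
proof (cases "Q_scale = 0")
  case True
  then have "{\<omega>\<in>space M. \<bar>Q_norm \<omega> - expectation Q_norm\<bar> > (2 + t) * Q_scale} = {}"
    using Q_norm_eq_0_if_Q_scale_eq_0 moments_Q_norm_if_Q_scale_eq_0 by auto
  then show ?thesis by (simp only: measure_empty) simp
next
  case False
  then have pos: "Q_scale > 0" using Q_scale_nonneg by simp
  then obtain m where tail: "\<forall>s>0. prob {\<omega>\<in>space M. \<bar>Q_norm \<omega> - m\<bar> > s} \<le> 2 * exp (- (s\<^sup>2 / Q_scale\<^sup>2))"
    and close: "(expectation Q_norm - m)\<^sup>2 + variance Q_norm \<le> 3 * Q_scale\<^sup>2"
    using Q_norm_median_tail by blast
  have "(expectation Q_norm - m)\<^sup>2 \<le> 4 * Q_scale\<^sup>2"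
    using close variance_positive[of Q_norm] zero_le_power2[of Q_scale] by linarith
  then have "\<bar>expectation Q_norm - m\<bar> \<le> \<bar>2 * Q_scale\<bar>"
    unfolding abs_le_square_iff by (simp add: power_mult_distrib)
  then have "\<bar>expectation Q_norm - m\<bar> \<le> 2 * Q_scale"
    using pos by simp
  then have "{\<omega>\<in>space M. \<bar>Q_norm \<omega> - expectation Q_norm\<bar> > (2 + t) * Q_scale}
      \<subseteq> {\<omega>\<in>space M. \<bar>Q_norm \<omega> - m\<bar> > t * Q_scale}"
    by (auto simp: algebra_simps)
  then have "prob {\<omega>\<in>space M. \<bar>Q_norm \<omega> - expectation Q_norm\<bar> > (2 + t) * Q_scale}
      \<le> prob {\<omega>\<in>space M. \<bar>Q_norm \<omega> - m\<bar> > t * Q_scale}"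
    by (intro finite_measure_mono) auto
  also have "\<dots> \<le> 2 * exp (- t\<^sup>2)"
    using tail[rule_format, of "t * Q_scale"] pos \<open>t > 0\<close> by (simp add: power_mult_distrib)
  finally show ?thesis .
qed

end

lemma bigO_P_if_exceptional_sets:
  assumes prob: "\<And>n. prob_space (M n)" and sets: "\<And>n. U n \<in> sets (M n)"
    and small: "(\<lambda>n. measure (M n) (U n)) \<longlonglongrightarrow> 0"
    and covers: "\<forall>\<^sub>F n in sequentially. \<forall>\<omega>\<in>space (M n). \<bar>Y n \<omega>\<bar> > K * a n \<longrightarrow> \<omega> \<in> U n"
  shows "bigO_P M Y a"
  unfolding bigO_P_def
proof (intro allI impI exI[of _ K])
  fix \<delta> :: real
  assume "\<delta> > 0"
  with small have "\<forall>\<^sub>F n in sequentially. measure (M n) (U n) < \<delta>"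
    by (rule order_tendstoD)
  with covers show "\<forall>\<^sub>F n in sequentially. measure (M n) {\<omega> \<in> space (M n). \<bar>Y n \<omega>\<bar> > K * a n} < \<delta>"
  proof eventually_elim
    case (elim n)
    have "measure (M n) {\<omega> \<in> space (M n). \<bar>Y n \<omega>\<bar> > K * a n} \<le> measure (M n) (U n)"
      using elim(1) prob_space.finite_measure[OF prob] sets
      by (intro finite_measure.finite_measure_mono_AE) auto
    with elim(2) show ?case by linarith
  qed
qed

lemma Max_abs_gt_imp:
  fixes f :: "'b \<Rightarrow> real"
  assumes "finite A" "A \<noteq> {}" "\<And>a. a \<in> A \<Longrightarrow> f a \<ge> 0" "\<bar>Max (f ` A)\<bar> > t"
  shows "\<exists>a\<in>A. f a > t"
proof -
  have "Max (f ` A) \<ge> 0"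
    using assms(1-3) by (meson Max_ge all_not_in_conv finite_imageI image_eqI order_trans)
  then show ?thesis using assms by (simp add: Max_gr_iff)
qed

lemma one_le_ln_nat:
  assumes "n \<ge> 3"
  shows "1 \<le> ln (real n)"
proof -
  have "exp 1 \<le> real n" using e_less_272 assms by linarith
  then show ?thesis using assms by (subst ln_ge_iff) auto
qed

lemma abs_power2_add_sub_le:
  fixes d \<mu> T \<epsilon> B :: real
  assumes d: "\<bar>d\<bar> \<le> 4 * \<epsilon>" and "0 \<le> \<epsilon>" "\<epsilon> \<le> 1" "1 \<le> B"
    and \<mu>: "\<bar>\<mu>\<bar> \<le> B" and T: "0 \<le> T - \<mu>\<^sup>2" "T - \<mu>\<^sup>2 \<le> 3 * \<epsilon>\<^sup>2"
  shows "\<bar>(\<mu> + d)\<^sup>2 - T\<bar> \<le> 27 * \<epsilon> * B"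
proof -
  have eq: "(\<mu> + d)\<^sup>2 - T = d\<^sup>2 + 2 * \<mu> * d - (T - \<mu>\<^sup>2)"
    by (simp add: power2_eq_square algebra_simps)
  have \<epsilon>: "\<epsilon>\<^sup>2 \<le> \<epsilon> * B"
    using assms by (simp add: power2_eq_square mult_mono)
  have "d\<^sup>2 \<le> 16 * \<epsilon>\<^sup>2"
    using power_mono[OF d abs_ge_zero, of 2] by (simp add: power_mult_distrib)
  moreover have "\<bar>2 * \<mu> * d\<bar> \<le> 8 * (\<epsilon> * B)"
    using mult_mono[OF \<mu> d] \<open>1 \<le> B\<close> by (simp add: abs_mult mult_ac)
  ultimately have "(\<mu> + d)\<^sup>2 - T \<le> 27 * (\<epsilon> * B)" "- ((\<mu> + d)\<^sup>2 - T) \<le> 27 * (\<epsilon> * B)"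
    unfolding eq using T \<epsilon> abs_le_iff[of "2 * \<mu> * d"] zero_le_power2[of d] by linarith+
  then show ?thesis by (simp add: abs_le_iff mult.assoc)
qed

lemma (in prob_space) prob_union_deviations_le:
  fixes V :: "nat \<Rightarrow> 'a \<Rightarrow> real" and \<mu> r :: "nat \<Rightarrow> real"
  assumes meas: "\<And>i. i < n \<Longrightarrow> V i \<in> borel_measurable M"
    and r: "\<And>i. i < n \<Longrightarrow> r i \<ge> 0"
    and tail: "\<And>i t. i < n \<Longrightarrow> t > 0 \<Longrightarrow>
      prob {\<omega>\<in>space M. \<bar>V i \<omega> - \<mu> i\<bar> > (2 + t) * r i} \<le> 2 * exp (- t\<^sup>2)"
    and "n \<ge> 3"
  shows "prob (\<Union>i<n. {\<omega>\<in>space M. \<bar>V i \<omega> - \<mu> i\<bar> > 4 * Max (r ` {..<n}) * sqrt (ln n)})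
    \<le> 2 / real n ^ 3"
proof -
  define L where "L = sqrt (ln n)"
  have L: "L \<ge> 1" "L\<^sup>2 = ln n" using one_le_ln_nat[OF \<open>n \<ge> 3\<close>] by (simp_all add: L_def)
  have "prob {\<omega>\<in>space M. \<bar>V i \<omega> - \<mu> i\<bar> > 4 * Max (r ` {..<n}) * L} \<le> 2 / real n ^ 4"
    if "i < n" for i
  proof -
    have "r i \<le> Max (r ` {..<n})" using that by (intro Max_ge) auto
    have "(2 + 2 * L) * r i \<le> 4 * L * r i"
      using mult_right_mono[OF L(1) r[OF that]] by (simp add: algebra_simps)
    also have "\<dots> \<le> 4 * L * Max (r ` {..<n})"
      using \<open>r i \<le> Max (r ` {..<n})\<close> L by (intro mult_left_mono) auto
    finally have "(2 + 2 * L) * r i \<le> 4 * Max (r ` {..<n}) * L" by (simp add: mult_ac)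
    then have "prob {\<omega>\<in>space M. \<bar>V i \<omega> - \<mu> i\<bar> > 4 * Max (r ` {..<n}) * L}
        \<le> prob {\<omega>\<in>space M. \<bar>V i \<omega> - \<mu> i\<bar> > (2 + 2 * L) * r i}"
      using meas[OF that] by (intro finite_measure_mono) auto
    also have "\<dots> \<le> 2 * exp (- (2 * L)\<^sup>2)"
      using tail[OF that, of "2 * L"] L by (simp add: algebra_simps)
    also have "exp (- (2 * L)\<^sup>2) = 1 / real n ^ 4"
      using L exp_of_nat_mult[of 4 "ln (real n)"] \<open>n \<ge> 3\<close>
      by (simp add: power_mult_distrib exp_minus divide_inverse)
    finally show ?thesis by simp
  qed
  then have "prob (\<Union>i<n. {\<omega>\<in>space M. \<bar>V i \<omega> - \<mu> i\<bar> > 4 * Max (r ` {..<n}) * L})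
      \<le> (\<Sum>i<n. 2 / real n ^ 4)"
    using meas by (intro order_trans[OF measure_UNION_le] sum_mono) auto
  also have "\<dots> = 2 / real n ^ 3"
    using \<open>n \<ge> 3\<close> by (simp add: power_eq_if)
  finally show ?thesis by (simp add: L_def)
qed

locale subgaussian_deviation_array =
  fixes M :: "nat \<Rightarrow> 'a measure" and V :: "nat \<Rightarrow> nat \<Rightarrow> 'a \<Rightarrow> real"
    and \<mu> r :: "nat \<Rightarrow> nat \<Rightarrow> real"
  assumes prob: "prob_space (M n)"
    and V_measurable: "i < n \<Longrightarrow> V n i \<in> borel_measurable (M n)"
    and r_nonneg: "i < n \<Longrightarrow> r n i \<ge> 0"
    and deviation_tail: "i < n \<Longrightarrow> t > 0 \<Longrightarrow>
      measure (M n) {\<omega>\<in>space (M n). \<bar>V n i \<omega> - \<mu> n i\<bar> > (2 + t) * r n i} \<le> 2 * exp (- t\<^sup>2)"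
begin

definition exceptional :: "nat \<Rightarrow> 'a set" where
  "exceptional n =
    (\<Union>i<n. {\<omega>\<in>space (M n). \<bar>V n i \<omega> - \<mu> n i\<bar> > 4 * Max (r n ` {..<n}) * sqrt (ln n)})"

lemma exceptional_sets: "exceptional n \<in> sets (M n)"
  using V_measurable unfolding exceptional_def by measurable

lemma measure_exceptional_tendsto_0: "(\<lambda>n. measure (M n) (exceptional n)) \<longlonglongrightarrow> 0"
proof (rule Lim_null_comparison)
  show "\<forall>\<^sub>F n in sequentially. norm (measure (M n) (exceptional n)) \<le> 2 / real n ^ 3"
    using eventually_ge_at_top[of 3]
  proof eventually_elim
    case (elim n)
    then show ?case
      unfolding exceptional_def
      using prob_space.prob_union_deviations_le[OF prob V_measurable r_nonneg deviation_tail]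
      by simp
  qed
  show "(\<lambda>n. 2 / real n ^ 3) \<longlonglongrightarrow> 0"
    by (intro tendsto_divide_0[OF tendsto_const] filterlim_at_top_imp_at_infinity
        filterlim_pow_at_top filterlim_real_sequentially) simp
qed

lemma deviation_le_if_not_exceptional:
  "i < n \<Longrightarrow> \<omega> \<in> space (M n) \<Longrightarrow> \<omega> \<notin> exceptional n \<Longrightarrow>
    \<bar>V n i \<omega> - \<mu> n i\<bar> \<le> 4 * (Max (r n ` {..<n}) * sqrt (ln n))"
  unfolding exceptional_def by (auto simp: mult.assoc not_less)

theorem bigO_P_Max_deviation:
  "bigO_P M (\<lambda>n \<omega>. Max ((\<lambda>i. \<bar>V n i \<omega> - \<mu> n i\<bar>) ` {..<n}))
     (\<lambda>n. Max (r n ` {..<n}) * sqrt (ln n))"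
proof (rule bigO_P_if_exceptional_sets[OF prob exceptional_sets measure_exceptional_tendsto_0])
  show "\<forall>\<^sub>F n in sequentially. \<forall>\<omega>\<in>space (M n).
      \<bar>Max ((\<lambda>i. \<bar>V n i \<omega> - \<mu> n i\<bar>) ` {..<n})\<bar> > 4 * (Max (r n ` {..<n}) * sqrt (ln n))
      \<longrightarrow> \<omega> \<in> exceptional n"
  proof (rule eventually_mono[OF eventually_gt_at_top[of 0]], intro ballI impI)
    fix n \<omega>
    assume "n > 0" "\<omega> \<in> space (M n)"
      and gt: "\<bar>Max ((\<lambda>i. \<bar>V n i \<omega> - \<mu> n i\<bar>) ` {..<n})\<bar> > 4 * (Max (r n ` {..<n}) * sqrt (ln n))"
    have "\<exists>i\<in>{..<n}. \<bar>V n i \<omega> - \<mu> n i\<bar> > 4 * (Max (r n ` {..<n}) * sqrt (ln n))"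
      using \<open>n > 0\<close> gt by (intro Max_abs_gt_imp) auto
    then obtain i where "i < n" "\<bar>V n i \<omega> - \<mu> n i\<bar> > 4 * (Max (r n ` {..<n}) * sqrt (ln n))"
      by blast
    then show "\<omega> \<in> exceptional n"
      using deviation_le_if_not_exceptional \<open>\<omega> \<in> space (M n)\<close> by (meson not_le)
  qed
qed

lemma square_deviation_le_if_not_exceptional:
  fixes T :: "nat \<Rightarrow> nat \<Rightarrow> real" and n :: nat
  defines "\<epsilon> \<equiv> Max (r n ` {..<n}) * sqrt (ln n)"
    and "B \<equiv> max (Max ((\<lambda>i. sqrt (T n i)) ` {..<n})) 1"
  assumes mean_square: "(\<mu> n i)\<^sup>2 \<le> T n i"
    and variance_bound: "T n i - (\<mu> n i)\<^sup>2 \<le> 3 * (r n i)\<^sup>2"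
    and "n \<ge> 3" "\<epsilon> \<le> 1" "i < n" "\<omega> \<in> space (M n)" "\<omega> \<notin> exceptional n"
  shows "\<bar>(V n i \<omega>)\<^sup>2 - T n i\<bar> \<le> 27 * (\<epsilon> * B)"
proof -
  have "r n i \<le> Max (r n ` {..<n})" using \<open>i < n\<close> by (intro Max_ge) auto
  also have "\<dots> \<le> \<epsilon>"
    using one_le_ln_nat[OF \<open>n \<ge> 3\<close>] calculation r_nonneg[OF \<open>i < n\<close>]
    by (simp add: \<epsilon>_def mult_le_cancel_left1)
  finally have "r n i \<le> \<epsilon>" .
  then have var: "T n i - (\<mu> n i)\<^sup>2 \<le> 3 * \<epsilon>\<^sup>2"
    using variance_bound power_mono[of "r n i" \<epsilon> 2] r_nonneg[OF \<open>i < n\<close>] by linarith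
  have "\<bar>\<mu> n i\<bar> \<le> sqrt (T n i)"
    using real_sqrt_le_mono[OF mean_square] by simp
  also have "\<dots> \<le> B" unfolding B_def using \<open>i < n\<close> by (intro max.coboundedI1 Max_ge) auto
  finally have "\<bar>(\<mu> n i + (V n i \<omega> - \<mu> n i))\<^sup>2 - T n i\<bar> \<le> 27 * \<epsilon> * B"
    using deviation_le_if_not_exceptional[OF assms(7-9)] assms(5-6) mean_square var
    by (intro abs_power2_add_sub_le) (auto simp: \<epsilon>_def B_def)
  then show ?thesis by (simp add: mult.assoc)
qed

theorem bigO_P_Max_square_deviation:
  fixes T :: "nat \<Rightarrow> nat \<Rightarrow> real"
  assumes mean_square: "\<And>n i. i < n \<Longrightarrow> (\<mu> n i)\<^sup>2 \<le> T n i"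
    and variance_bound: "\<And>n i. i < n \<Longrightarrow> T n i - (\<mu> n i)\<^sup>2 \<le> 3 * (r n i)\<^sup>2"
    and rate: "(\<lambda>n. Max (r n ` {..<n}) * sqrt (ln n)) \<longlonglongrightarrow> 0"
  shows "bigO_P M (\<lambda>n \<omega>. Max ((\<lambda>i. \<bar>(V n i \<omega>)\<^sup>2 - T n i\<bar>) ` {..<n}))
     (\<lambda>n. Max (r n ` {..<n}) * sqrt (ln n) * max (Max ((\<lambda>i. sqrt (T n i)) ` {..<n})) 1)"
proof (rule bigO_P_if_exceptional_sets[OF prob exceptional_sets measure_exceptional_tendsto_0])
  have "\<forall>\<^sub>F n in sequentially. n \<ge> 3 \<and> Max (r n ` {..<n}) * sqrt (ln n) \<le> 1"
    using eventually_ge_at_top[of 3] order_tendstoD(2)[OF rate zero_less_one]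
    by eventually_elim simp
  then show "\<forall>\<^sub>F n in sequentially. \<forall>\<omega>\<in>space (M n).
      \<bar>Max ((\<lambda>i. \<bar>(V n i \<omega>)\<^sup>2 - T n i\<bar>) ` {..<n})\<bar>
        > 27 * (Max (r n ` {..<n}) * sqrt (ln n) * max (Max ((\<lambda>i. sqrt (T n i)) ` {..<n})) 1)
      \<longrightarrow> \<omega> \<in> exceptional n"
  proof (rule eventually_mono, intro ballI impI)
    fix n \<omega>
    assume n: "n \<ge> 3 \<and> Max (r n ` {..<n}) * sqrt (ln n) \<le> 1" and \<omega>: "\<omega> \<in> space (M n)"
      and gt: "\<bar>Max ((\<lambda>i. \<bar>(V n i \<omega>)\<^sup>2 - T n i\<bar>) ` {..<n})\<bar>
        > 27 * (Max (r n ` {..<n}) * sqrt (ln n) * max (Max ((\<lambda>i. sqrt (T n i)) ` {..<n})) 1)"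
    have "\<exists>i\<in>{..<n}. \<bar>(V n i \<omega>)\<^sup>2 - T n i\<bar>
        > 27 * (Max (r n ` {..<n}) * sqrt (ln n) * max (Max ((\<lambda>i. sqrt (T n i)) ` {..<n})) 1)"
      using n gt by (intro Max_abs_gt_imp) (auto simp: lessThan_empty_iff)
    then obtain i where "i < n" "\<bar>(V n i \<omega>)\<^sup>2 - T n i\<bar>
        > 27 * (Max (r n ` {..<n}) * sqrt (ln n) * max (Max ((\<lambda>i. sqrt (T n i)) ` {..<n})) 1)"
      by blast
    then show "\<omega> \<in> exceptional n"
      using square_deviation_le_if_not_exceptional[where T=T and n=n and i=i] mean_square variance_bound n \<omega>
      by (meson not_le)
  qed
qed

end

theorem mainTheorem9:
  fixes M :: "nat \<Rightarrow> 'a measure"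
    and p :: "nat \<Rightarrow> nat"
    and X Z :: "nat \<Rightarrow> nat \<Rightarrow> nat \<Rightarrow> 'a \<Rightarrow> real"
    and Sigma SigmaHalf Q :: "nat \<Rightarrow> nat \<Rightarrow> nat \<Rightarrow> nat \<Rightarrow> real"
    and c :: "nat \<Rightarrow> nat \<Rightarrow> real"
  assumes prob: "\<And>n. prob_space (M n)"
    and meas: "\<And>n i j. i < n \<Longrightarrow> j < p n \<Longrightarrow> X n i j \<in> borel_measurable (M n)"
    and int1: "\<And>n i j. i < n \<Longrightarrow> j < p n \<Longrightarrow> integrable (M n) (X n i j)"
    and mean0: "\<And>n i j. i < n \<Longrightarrow> j < p n \<Longrightarrow> integral\<^sup>L (M n) (X n i j) = 0"
    and int2: "\<And>n i j k. i < n \<Longrightarrow> j < p n \<Longrightarrow> k < p n \<Longrightarrow>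
                 integrable (M n) (\<lambda>\<omega>. X n i j \<omega> * X n i k \<omega>)"
    and cov: "\<And>n i j k. i < n \<Longrightarrow> j < p n \<Longrightarrow> k < p n \<Longrightarrow>
                 integral\<^sup>L (M n) (\<lambda>\<omega>. X n i j \<omega> * X n i k \<omega>) = (if j = k then 1 else 0)"
    and sqrt_psd: "\<And>n i. i < n \<Longrightarrow> pos_semidef (p n) (SigmaHalf n i)"
    and sqrt_eq: "\<And>n i. i < n \<Longrightarrow> \<forall>j<p n. \<forall>k<p n.
                 Sigma n i j k = mat_mult (p n) (SigmaHalf n i) (SigmaHalf n i) j k"
    and Zdef: "\<And>n i j \<omega>. i < n \<Longrightarrow> j < p n \<Longrightarrow> \<omega> \<in> space (M n) \<Longrightarrow>
                 Z n i j \<omega> = mat_vec (p n) (SigmaHalf n i) (\<lambda>k. X n i k \<omega>) j"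
    and cpos: "\<And>n i. i < n \<Longrightarrow> c n i > 0"
    and conc: "\<And>n i f m t. i < n \<Longrightarrow> convex_lip1 (p n) f \<Longrightarrow>
                 is_median (M n) (\<lambda>\<omega>. f (\<lambda>j. X n i j \<omega>)) m \<Longrightarrow> t > 0 \<Longrightarrow>
                 measure (M n) {\<omega>\<in>space (M n). \<bar>f (\<lambda>j. X n i j \<omega>) - m\<bar> > t}
                   \<le> 2 * exp (- c n i * t\<^sup>2)"
    and Qpd: "\<And>n i. i < n \<Longrightarrow> pos_def (p n) (Q n i)"
  shows "bigO_P M
           (\<lambda>n \<omega>. Max ((\<lambda>i. \<bar>sqrt (quad_form (p n) (Q n i) (\<lambda>j. Z n i j \<omega>))
                   - integral\<^sup>L (M n) (\<lambda>\<omega>'. sqrt (quad_form (p n) (Q n i) (\<lambda>j. Z n i j \<omega>')))\<bar>) ` {..<n}))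
           (\<lambda>n. Max ((\<lambda>i. sqrt (op_norm (p n) (\<lambda>j k. mat_mult (p n) (Q n i) (Sigma n i) j k / c n i))) ` {..<n})
                * sqrt (ln (real n)))
       \<and> (((\<lambda>n. Max ((\<lambda>i. sqrt (op_norm (p n) (\<lambda>j k. mat_mult (p n) (Q n i) (Sigma n i) j k / c n i))) ` {..<n})
                * sqrt (ln (real n))) \<longlonglongrightarrow> 0)
          \<longrightarrow> bigO_P M
           (\<lambda>n \<omega>. Max ((\<lambda>i. \<bar>quad_form (p n) (Q n i) (\<lambda>j. Z n i j \<omega>)
                   - mat_trace (p n) (mat_mult (p n) (Sigma n i) (Q n i))\<bar>) ` {..<n}))
           (\<lambda>n. Max ((\<lambda>i. sqrt (op_norm (p n) (\<lambda>j k. mat_mult (p n) (Q n i) (Sigma n i) j k / c n i))) ` {..<n})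
                * sqrt (ln (real n))
                * max (Max ((\<lambda>i. sqrt (mat_trace (p n) (mat_mult (p n) (Sigma n i) (Q n i)))) ` {..<n})) 1))"
proof -
  define V where "V = (\<lambda>n i \<omega>. sqrt (quad_form (p n) (Q n i) (\<lambda>j. Z n i j \<omega>)))"
  define r where "r = (\<lambda>n i. sqrt (op_norm (p n) (\<lambda>j k. mat_mult (p n) (Q n i) (Sigma n i) j k / c n i)))"
  define T where "T = (\<lambda>n i. mat_trace (p n) (mat_mult (p n) (Sigma n i) (Q n i)))"
  have vector: "quadratic_form_of_isotropic (M n) (p n) (X n i) (c n i)
      (SigmaHalf n i) (Sigma n i) (Q n i) (Z n i)" if "i < n" for n i
    using that meas int2 cov cpos conc sqrt_psd sqrt_eq Zdef Qpd pos_semidef_if_pos_def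
    by (intro quadratic_form_of_isotropic.intro isotropic_concentrated_vector.intro prob
        isotropic_concentrated_vector_axioms.intro quadratic_form_of_isotropic_axioms.intro) simp_all
  interpret subgaussian_deviation_array M V "\<lambda>n i. integral\<^sup>L (M n) (V n i)" r
    using quadratic_form_of_isotropic.measurable_Q_norm[OF vector]
      quadratic_form_of_isotropic.Q_norm_deviation_tail[OF vector]
    by (intro subgaussian_deviation_array.intro prob) (simp_all add: V_def r_def op_norm_nonneg)
  have "(\<lambda>i. \<bar>(V n i \<omega>)\<^sup>2 - T n i\<bar>) ` {..<n}
      = (\<lambda>i. \<bar>quad_form (p n) (Q n i) (\<lambda>j. Z n i j \<omega>) - T n i\<bar>) ` {..<n}" for n \<omega>
    using pos_semidef_if_pos_def[OF Qpd] by (intro image_cong) (auto simp: V_def pos_semidef_def)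
  moreover have "bigO_P M (\<lambda>n \<omega>. Max ((\<lambda>i. \<bar>(V n i \<omega>)\<^sup>2 - T n i\<bar>) ` {..<n}))
      (\<lambda>n. Max (r n ` {..<n}) * sqrt (ln n) * max (Max ((\<lambda>i. sqrt (T n i)) ` {..<n})) 1)"
    if "(\<lambda>n. Max (r n ` {..<n}) * sqrt (ln n)) \<longlonglongrightarrow> 0"
    using that quadratic_form_of_isotropic.Q_norm_expectation_bounds[OF vector]
    by (intro bigO_P_Max_square_deviation) (simp_all add: V_def r_def T_def)
  ultimately show ?thesis
    using bigO_P_Max_deviation by (simp add: V_def r_def T_def)
qed

end
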